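(* Consider an autoregressive language model over a finite vocabulary $V$ with unembedding $U$, $u_t=U^\top e_t$, and a query $q$ with correct answer $a=a_1\cdots a_N$. For $k=1,\dots,N$ let $p_k=qa_1\cdots a_{k-1}$, let $r_k$ be the unsteered final representation at prefix $p_k$, $P^k_\theta=\mathrm{softmax}(Ur_k)$, and $P_0^k=P^k_\theta(a_k)<1$, so the unsteered probability of $a$ is $P_0=\prod_kP_0^k$. For steering coefficient $r_e\neq0$ the steered step distribution is $\mathrm{softmax}(U(r_k+d_k))$ with $d_k=\lambda|r_e|v_k$, $\lambda>0$, and the steered probability of $a$ is $P_{\theta,r_e}(a\mid q)=\prod_k\mathrm{softmax}(U(r_k+d_k))_{a_k}$. Suppose that for each $k$ there is $S_k\subseteq V$ with $a_k\in S_k$, $|S_k|=T\ge3$, $\epsilon_k\in[0,1)$ defined by $\sum_{i\in S_k\setminus\{a_k\}}P^k_\theta(i)=(1-\epsilon_k)(1-P_0^k)>0$, and that $v_k$ is a random unit vector such that $X^k_i=\langle v_k,u_i\rangle$, $i\in S_k$, are i.i.d. continuous with variance $\sigma_k^2>0$. Define $I^k_\pm=\{i\in S_k\setminus\{a_k\}:\pm(X^k_i-X^k_{a_k})>0\}$, $P^k_\pm=\sum_{i\in I^k_\pm}P^k_\theta(i)$, $c^k_\pm=\frac{1}{P^k_\pm}\sum_{i\in I^k_\pm}P^k_\theta(i)(X^k_i-X^k_{a_k})$, $\alpha_k=\frac{\min\{P^k_+,P^k_-\}}{(1-P^k_0)(1-\epsilon_k)}$, $\beta_k=\min\{|c^k_-|,c^k_+\}/\sigma_k$.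 Then with probability at least $1-\frac{2N}{T}$, all $\alpha_k,\beta_k>0$ and $$P_{\theta,r_e}(a\mid q)\le\frac{P_0}{\prod_{k=1}^N\Big(P_0^k+(1-P_0^k)\,\alpha_k(1-\epsilon_k)\big(1+\tfrac{\lambda^2\sigma_k^2\beta_k^2}{2}r_e^2\big)\Big)}.$$
   Context: Helpfulness is the probability the model assigns to the correct answer; for a multi-token answer this is the product of the per-step conditional probabilities of its tokens. Steering with coefficient $r_e$ changes the final hidden representation at step $k$ by $d_k$, whose direction is modeled as random with respect to the unembeddings of the tokens in $S_k$ (typically the top-$T$ tokens at that step). *)

theory Defs
  imports "HOL-Probability.Probability"
begin

definition softmax :: "('v::finite \<Rightarrow> 'e::real_inner) \<Rightarrow> 'e \<Rightarrow> 'v \<Rightarrow> real" where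
  "softmax u r t = exp (u t \<bullet> r) / (\<Sum>s\<in>UNIV. exp (u s \<bullet> r))"

text \<open>Given a realized direction w, the sets I+ and I- (X_i = w . u_i).\<close>
definition Iplus :: "('v \<Rightarrow> 'e::real_inner) \<Rightarrow> 'v set \<Rightarrow> 'v \<Rightarrow> 'e \<Rightarrow> 'v set" where
  "Iplus u S a w = {i \<in> S - {a}. w \<bullet> u i - w \<bullet> u a > 0}"

definition Iminus :: "('v \<Rightarrow> 'e::real_inner) \<Rightarrow> 'v set \<Rightarrow> 'v \<Rightarrow> 'e \<Rightarrow> 'v set" where
  "Iminus u S a w = {i \<in> S - {a}. -(w \<bullet> u i - w \<bullet> u a) > 0}"

definition massI :: "('v \<Rightarrow> real) \<Rightarrow> 'v set \<Rightarrow> real" where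
  "massI P I = (\<Sum>i\<in>I. P i)"

definition cI :: "('v \<Rightarrow> real) \<Rightarrow> ('v \<Rightarrow> 'e::real_inner) \<Rightarrow> 'v \<Rightarrow> 'e \<Rightarrow> 'v set \<Rightarrow> real" where
  "cI P u a w I = (1 / massI P I) * (\<Sum>i\<in>I. P i * (w \<bullet> u i - w \<bullet> u a))"

definition alphaK :: "('v::finite \<Rightarrow> 'e::real_inner) \<Rightarrow> 'e \<Rightarrow> 'v set \<Rightarrow> 'v \<Rightarrow> real \<Rightarrow> 'e \<Rightarrow> real" where
  "alphaK u r S a eps w =
     min (massI (softmax u r) (Iplus u S a w)) (massI (softmax u r) (Iminus u S a w))
     / ((1 - softmax u r a) * (1 - eps))"

definition betaK :: "('v::finite \<Rightarrow> 'e::real_inner) \<Rightarrow> 'e \<Rightarrow> 'v set \<Rightarrow> 'v \<Rightarrow> real \<Rightarrow> 'e \<Rightarrow> real" where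
  "betaK u r S a sg w =
     min \<bar>cI (softmax u r) u a w (Iminus u S a w)\<bar> (cI (softmax u r) u a w (Iplus u S a w)) / sg"

end

theory Submission
  imports Defs
begin

text \<open>
  Steering by s = \<lambda>|r_e| multiplies the odds of every token t against a_k by
  exp (s (X_t - X_{a_k})), so the steered probability of a_k is P_0 divided by
  \<Sum>_t P(t) exp (s (X_t - X_{a_k})). Keeping only a_k and the tokens of I_+ and applying Jensen's
  inequality on I_+ bounds this sum below by P_0 + P_+ exp (s c_+), and
  exp x \<ge> 1 + x^2/2 for x \<ge> 0 gives the factor 1 + \<lambda>^2\<sigma>^2\<beta>^2 r_e^2/2.
  The bound needs I_+ and I_- to be nonempty, i.e. X_{a_k} is neither the largest nor the
  smallest of the T values X_i. For i.i.d. atomless values ties are null and, by exchangeability,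
  each index is the strict maximum with the same probability, so each extreme event has
  probability at most 1/T; a union bound over the 2N events finishes the proof.
\<close>

lemma (in prob_space) indep_var_of_indep_vars:
  assumes ind: "indep_vars M' X I" and "i \<in> I" "j \<in> I" "i \<noteq> j"
  shows "indep_var (M' i) (X i) (M' j) (X j)"
proof -
  have "indep_var (PiM {i} M') (\<lambda>\<omega>. restrict (\<lambda>k. X k \<omega>) {i})
      (PiM {j} M') (\<lambda>\<omega>. restrict (\<lambda>k. X k \<omega>) {j})"
    by (rule indep_var_restrict[OF ind]) (use assms in auto)
  then have "indep_var (M' i) ((\<lambda>f. f i) \<circ> (\<lambda>\<omega>. restrict (\<lambda>k. X k \<omega>) {i}))
      (M' j) ((\<lambda>f. f j) \<circ> (\<lambda>\<omega>. restrict (\<lambda>k. X k \<omega>) {j}))"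
    by (rule indep_var_compose) auto
  then show ?thesis by (simp add: comp_def)
qed

lemma diagonal_in_sets_borel_pair: "{p :: real \<times> real. fst p = snd p} \<in> sets (borel \<Otimes>\<^sub>M borel)"
proof -
  have "{p \<in> space (borel \<Otimes>\<^sub>M borel). fst p = (snd p :: real)} \<in> sets (borel \<Otimes>\<^sub>M borel)"
    by measurable
  then show ?thesis by (simp add: space_pair_measure)
qed

lemma emeasure_pair_measure_diagonal_eq_0:
  fixes M N :: "real measure"
  assumes "sigma_finite_measure M" and sets_N: "sets N = sets borel" and sets_M: "sets M = sets borel"
    and atomless: "\<And>x. emeasure M {x} = 0"
  shows "emeasure (N \<Otimes>\<^sub>M M) {p. fst p = snd p} = 0"
proof -
  have diag: "{p. fst p = snd p} \<in> sets (N \<Otimes>\<^sub>M M)"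
    using diagonal_in_sets_borel_pair by (simp add: sets_N sets_M cong: sets_pair_measure_cong)
  have "emeasure (N \<Otimes>\<^sub>M M) {p. fst p = snd p} = (\<integral>\<^sup>+x. emeasure M {x} \<partial>N)"
    by (simp add: sigma_finite_measure.emeasure_pair_measure_alt[OF assms(1) diag] vimage_def)
  also have "\<dots> = 0" by (simp add: atomless)
  finally show ?thesis .
qed

lemma (in prob_space) prob_indep_tie_eq_0:
  fixes X Y :: "'a \<Rightarrow> real"
  assumes ind: "indep_var borel X borel Y" and atomless: "\<And>y. prob {\<omega>\<in>space M. Y \<omega> = y} = 0"
  shows "prob {\<omega>\<in>space M. X \<omega> = Y \<omega>} = 0"
proof -
  from ind have rv: "random_variable borel X" "random_variable borel Y"
    and joint: "distr M borel X \<Otimes>\<^sub>M distr M borel Y = distr M (borel \<Otimes>\<^sub>M borel) (\<lambda>\<omega>. (X \<omega>, Y \<omega>))"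
    unfolding indep_var_distribution_eq by auto
  interpret Y: prob_space "distr M borel Y" by (rule prob_space_distr) fact
  have "{\<omega>\<in>space M. Y \<omega> = y} = Y -` {y} \<inter> space M" for y by auto
  then have "emeasure (distr M borel Y) {y} = 0" for y
    using atomless[of y] rv by (simp add: emeasure_distr emeasure_eq_measure)
  then have "emeasure (distr M borel X \<Otimes>\<^sub>M distr M borel Y) {p. fst p = snd p} = 0"
    by (intro emeasure_pair_measure_diagonal_eq_0) (auto intro: Y.sigma_finite_measure_axioms)
  moreover have "(\<lambda>\<omega>. (X \<omega>, Y \<omega>)) -` {p. fst p = snd p} \<inter> space M = {\<omega>\<in>space M. X \<omega> = Y \<omega>}"
    by auto
  ultimately show ?thesis
    using rv unfolding joint
    by (subst (asm) emeasure_distr) (auto intro: measurable_Pair diagonal_in_sets_borel_pair simp: emeasure_eq_measure)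
qed

lemma sets_PiM_strict_argmax:
  fixes S :: "'i set"
  assumes "finite S" "l \<in> S"
  shows "{x \<in> space (PiM S (\<lambda>_. borel)). \<forall>k\<in>S-{l}. x k < (x l :: real)} \<in> sets (PiM S (\<lambda>_. borel))"
proof (intro predE pred_intros_finite)
  show "finite (S - {l})" using assms(1) by simp
  fix k assume "k \<in> S - {l}"
  then have "k \<in> S" by simp
  then show "Measurable.pred (PiM S (\<lambda>_. borel)) (\<lambda>x. x k < (x l :: real))"
    using assms(2) by measurable
qed

text \<open>Transposing the coordinates i and j preserves the product measure and maps one event to the other.\<close>
lemma PiM_strict_argmax_swap:
  fixes \<mu> :: "real measure" and S :: "'i set"
  assumes \<mu>: "prob_space \<mu>" "sets \<mu> = sets borel" and S: "finite S" "i \<in> S" "j \<in> S"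
  defines "E \<equiv> \<lambda>l. {x \<in> space (PiM S (\<lambda>_. \<mu>)). \<forall>k\<in>S-{l}. x k < x l}"
  shows "measure (PiM S (\<lambda>_. \<mu>)) (E i) = measure (PiM S (\<lambda>_. \<mu>)) (E j)"
proof -
  define f where "f = id(i := j, j := i)"
  define t where "t x = (\<lambda>n\<in>S. x (f n))" for x :: "'i \<Rightarrow> real"
  have f: "inj_on f S" "f \<in> S \<rightarrow> S" "\<And>n. f (f n) = n"
    using S by (auto simp: f_def inj_on_def)
  have space_eq: "space (PiM S (\<lambda>_. \<mu>)) = space (PiM S (\<lambda>_. borel))"
    using sets_eq_imp_space_eq[OF \<mu>(2)] by (simp add: space_PiM)
  have "E i \<in> sets (PiM S (\<lambda>_. borel))"
    unfolding E_def space_eq using S(1,2) by (rule sets_PiM_strict_argmax)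
  then have E_sets: "E i \<in> sets (PiM S (\<lambda>_. \<mu>))"
    using \<mu>(2) by (simp cong: sets_PiM_cong)
  have "distr (PiM S (\<lambda>_. \<mu>)) (PiM S (\<lambda>_. \<mu>)) t = PiM S (\<lambda>_. \<mu>)"
    using distr_PiM_reindex[of S "\<lambda>_. \<mu>" f S] \<mu> f unfolding t_def by simp
  moreover have "t \<in> measurable (PiM S (\<lambda>_. \<mu>)) (PiM S (\<lambda>_. \<mu>))"
    unfolding t_def using f by (intro measurable_restrict measurable_component_singleton) auto
  moreover have "t -` E i \<inter> space (PiM S (\<lambda>_. \<mu>)) = E j"
  proof -
    have f_img: "f ` (S - {i}) = S - {j}"
      using S f(3) by (force simp: f_def)
    have t_space: "t x \<in> space (PiM S (\<lambda>_. \<mu>))" if "x \<in> space (PiM S (\<lambda>_. \<mu>))" for x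
      using that f(2) by (auto simp: t_def space_PiM PiE_iff)
    have "t x \<in> E i \<longleftrightarrow> x \<in> E j" if x: "x \<in> space (PiM S (\<lambda>_. \<mu>))" for x
    proof -
      have "t x \<in> E i \<longleftrightarrow> (\<forall>k\<in>S-{i}. x (f k) < x (f i))"
        using t_space[OF x] S(2) by (simp add: E_def t_def)
      also have "\<dots> \<longleftrightarrow> (\<forall>k\<in>f ` (S-{i}). x k < x j)"
        by (auto simp: f_def)
      finally show ?thesis
        using x by (simp add: f_img E_def)
    qed
    then show ?thesis
      unfolding E_def by blast
  qed
  ultimately show ?thesis
    using E_sets by (metis measure_distr)
qed

lemma (in prob_space) prob_strict_argmax_eq:
  fixes Z :: "'i \<Rightarrow> 'a \<Rightarrow> real"
  assumes S: "finite S" "i \<in> S" "j \<in> S" and ind: "indep_vars (\<lambda>_. borel) Z S"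
    and ident: "\<And>k. k \<in> S \<Longrightarrow> distr M borel (Z k) = distr M borel (Z i)"
  shows "prob {\<omega>\<in>space M. \<forall>k\<in>S-{i}. Z k \<omega> < Z i \<omega>} = prob {\<omega>\<in>space M. \<forall>k\<in>S-{j}. Z k \<omega> < Z j \<omega>}"
proof -
  define \<mu> where "\<mu> = distr M borel (Z i)"
  define Y where "Y \<omega> = (\<lambda>k\<in>S. Z k \<omega>)" for \<omega>
  have rv: "\<And>k. k \<in> S \<Longrightarrow> random_variable borel (Z k)"
    using ind by (simp add: indep_vars_def)
  have \<mu>: "prob_space \<mu>" "sets \<mu> = sets borel"
    unfolding \<mu>_def using rv[OF S(2)] by (auto intro: prob_space_distr)
  have Y: "Y \<in> measurable M (PiM S (\<lambda>_. borel))"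
    unfolding Y_def by (intro measurable_restrict rv)
  have "distr M (PiM S (\<lambda>_. borel)) Y = PiM S (\<lambda>k. distr M borel (Z k))"
    using ind indep_vars_iff_distr_eq_PiM'[where I=S and M'="\<lambda>_. borel" and X=Z] S rv unfolding Y_def by auto
  also have "\<dots> = PiM S (\<lambda>_. \<mu>)"
    unfolding \<mu>_def by (rule PiM_cong) (auto simp: ident)
  finally have Y_distr: "distr M (PiM S (\<lambda>_. borel)) Y = PiM S (\<lambda>_. \<mu>)" .
  define E where "E l = {x \<in> space (PiM S (\<lambda>_. \<mu>)). \<forall>k\<in>S-{l}. x k < x l}" for l
  have prob_E: "prob {\<omega>\<in>space M. \<forall>k\<in>S-{l}. Z k \<omega> < Z l \<omega>} = measure (PiM S (\<lambda>_. \<mu>)) (E l)"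
    if "l \<in> S" for l
  proof -
    have space_\<mu>: "space \<mu> = UNIV"
      using sets_eq_imp_space_eq[OF \<mu>(2)] by simp
    then have space_eq: "space (PiM S (\<lambda>_. \<mu>)) = space (PiM S (\<lambda>_. borel))"
      by (simp add: space_PiM)
    have "E l \<in> sets (PiM S (\<lambda>_. borel))"
      unfolding E_def space_eq using S(1) that by (rule sets_PiM_strict_argmax)
    moreover have "Y -` E l \<inter> space M = {\<omega>\<in>space M. \<forall>k\<in>S-{l}. Z k \<omega> < Z l \<omega>}"
      using that space_\<mu> by (auto simp: E_def Y_def space_PiM)
    ultimately show ?thesis
      using measure_distr[OF Y] Y_distr by metis
  qed
  show ?thesis
    using prob_E[OF S(2)] prob_E[OF S(3)] PiM_strict_argmax_swap[OF \<mu> S] unfolding E_def by simp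
qed

lemma (in prob_space) prob_strict_argmax_le:
  fixes Z :: "'i \<Rightarrow> 'a \<Rightarrow> real"
  assumes S: "finite S" "i \<in> S" and ind: "indep_vars (\<lambda>_. borel) Z S"
    and ident: "\<And>k. k \<in> S \<Longrightarrow> distr M borel (Z k) = distr M borel (Z i)"
  shows "prob {\<omega>\<in>space M. \<forall>k\<in>S-{i}. Z k \<omega> < Z i \<omega>} \<le> 1 / card S"
proof -
  define E where "E l = {\<omega>\<in>space M. \<forall>k\<in>S-{l}. Z k \<omega> < Z l \<omega>}" for l
  have rv: "\<And>k. k \<in> S \<Longrightarrow> random_variable borel (Z k)"
    using ind by (simp add: indep_vars_def)
  have E_events: "E l \<in> events" if "l \<in> S" for l
    unfolding E_def using S(1) that rv
    by (intro predE pred_intros_finite) (auto simp: Measurable.pred_def intro!: borel_measurable_less)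
  have "disjoint_family_on E S"
  proof -
    have "\<not> (Z m \<omega> < Z l \<omega> \<and> Z l \<omega> < Z m \<omega>)" for l m \<omega> by simp
    then show ?thesis unfolding disjoint_family_on_def E_def by blast
  qed
  have "prob (E l) = prob (E i)" if "l \<in> S" for l
    using prob_strict_argmax_eq[OF S(1,2) that ind ident] by (simp add: E_def)
  then have "card S * prob (E i) = (\<Sum>l\<in>S. prob (E l))"
    by simp
  also have "\<dots> = prob (\<Union>l\<in>S. E l)"
    using \<open>disjoint_family_on E S\<close> S(1) E_events
    by (intro finite_measure_finite_Union[symmetric]) auto
  also have "\<dots> \<le> 1" by (rule prob_le_1)
  finally have "card S * prob (E i) \<le> 1" .
  moreover have "card S > 0"
    using S card_gt_0_iff by blast
  ultimately show ?thesis
    by (simp add: E_def field_simps)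
qed

lemma (in prob_space) prob_argmax_le:
  fixes Z :: "'i \<Rightarrow> 'a \<Rightarrow> real"
  assumes S: "finite S" "i \<in> S" and ind: "indep_vars (\<lambda>_. borel) Z S"
    and ident: "\<And>k. k \<in> S \<Longrightarrow> distr M borel (Z k) = distr M borel (Z i)"
    and atomless: "\<And>x. prob {\<omega>\<in>space M. Z i \<omega> = x} = 0"
  shows "prob {\<omega>\<in>space M. \<forall>k\<in>S-{i}. Z k \<omega> \<le> Z i \<omega>} \<le> 1 / card S"
proof -
  define E where "E = {\<omega>\<in>space M. \<forall>k\<in>S-{i}. Z k \<omega> < Z i \<omega>}"
  define tie where "tie k = {\<omega>\<in>space M. Z k \<omega> = Z i \<omega>}" for k
  have rv: "\<And>k. k \<in> S \<Longrightarrow> random_variable borel (Z k)"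
    using ind by (simp add: indep_vars_def)
  have E_events: "E \<in> events"
    unfolding E_def using S rv
    by (intro predE pred_intros_finite) (auto simp: Measurable.pred_def intro!: borel_measurable_less)
  have tie_events: "tie k \<in> events" if "k \<in> S" for k
    unfolding tie_def using rv[OF that] rv[OF S(2)] by measurable
  have tie_null: "prob (tie k) = 0" if "k \<in> S - {i}" for k
  proof -
    have "indep_var borel (Z k) borel (Z i)"
      using that S(2) by (intro indep_var_of_indep_vars[OF ind]) auto
    then show ?thesis
      unfolding tie_def by (rule prob_indep_tie_eq_0) (rule atomless)
  qed
  have "{\<omega>\<in>space M. \<forall>k\<in>S-{i}. Z k \<omega> \<le> Z i \<omega>} \<subseteq> E \<union> (\<Union>k\<in>S-{i}. tie k)"
    unfolding E_def tie_def by (auto simp: less_le)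
  then have "prob {\<omega>\<in>space M. \<forall>k\<in>S-{i}. Z k \<omega> \<le> Z i \<omega>} \<le> prob (E \<union> (\<Union>k\<in>S-{i}. tie k))"
    using E_events tie_events S(1) by (intro finite_measure_mono) auto
  also have "\<dots> \<le> prob E + prob (\<Union>k\<in>S-{i}. tie k)"
    using E_events tie_events S(1) by (intro measure_subadditive) (auto simp: emeasure_eq_measure)
  also have "prob (\<Union>k\<in>S-{i}. tie k) \<le> (\<Sum>k\<in>S-{i}. prob (tie k))"
    using tie_events S(1) by (intro finite_measure_subadditive_finite) auto
  also have "(\<Sum>k\<in>S-{i}. prob (tie k)) = 0"
    using tie_null by simp
  finally show ?thesis
    using prob_strict_argmax_le[OF S ind ident] unfolding E_def by simp
qed

lemma (in prob_space) prob_argmin_le: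
  fixes Z :: "'i \<Rightarrow> 'a \<Rightarrow> real"
  assumes S: "finite S" "i \<in> S" and ind: "indep_vars (\<lambda>_. borel) Z S"
    and ident: "\<And>k. k \<in> S \<Longrightarrow> distr M borel (Z k) = distr M borel (Z i)"
    and atomless: "\<And>x. prob {\<omega>\<in>space M. Z i \<omega> = x} = 0"
  shows "prob {\<omega>\<in>space M. \<forall>k\<in>S-{i}. Z i \<omega> \<le> Z k \<omega>} \<le> 1 / card S"
proof -
  have rv: "\<And>k. k \<in> S \<Longrightarrow> random_variable borel (Z k)"
    using ind by (simp add: indep_vars_def)
  have "indep_vars (\<lambda>_. borel) (\<lambda>k \<omega>. - Z k \<omega>) S"
    using indep_vars_compose2[OF ind, of "\<lambda>_ x. - x" "\<lambda>_. borel"] by simp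
  moreover have "distr M borel (\<lambda>\<omega>. - Z k \<omega>) = distr M borel (\<lambda>\<omega>. - Z i \<omega>)" if "k \<in> S" for k
  proof -
    have "distr M borel (\<lambda>\<omega>. - Z k \<omega>) = distr (distr M borel (Z k)) borel uminus"
      using rv[OF that] by (subst distr_distr) (auto simp: comp_def)
    also have "\<dots> = distr (distr M borel (Z i)) borel uminus"
      using ident[OF that] by simp
    also have "\<dots> = distr M borel (\<lambda>\<omega>. - Z i \<omega>)"
      using rv[OF S(2)] by (subst distr_distr) (auto simp: comp_def)
    finally show ?thesis .
  qed
  moreover have "prob {\<omega>\<in>space M. - Z i \<omega> = x} = 0" for x
  proof -
    have "{\<omega>\<in>space M. - Z i \<omega> = x} = {\<omega>\<in>space M. Z i \<omega> = - x}"
      by auto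
    then show ?thesis using atomless by simp
  qed
  ultimately have "prob {\<omega>\<in>space M. \<forall>k\<in>S-{i}. - Z k \<omega> \<le> - Z i \<omega>} \<le> 1 / card S"
    by (rule prob_argmax_le[OF S])
  then show ?thesis by simp
qed

lemma (in prob_space) prob_neither_argmax_nor_argmin_ge:
  fixes Z :: "'i \<Rightarrow> 'a \<Rightarrow> real"
  assumes S: "finite S" "i \<in> S" and ind: "indep_vars (\<lambda>_. borel) Z S"
    and ident: "\<And>k. k \<in> S \<Longrightarrow> distr M borel (Z k) = distr M borel (Z i)"
    and atomless: "\<And>x. prob {\<omega>\<in>space M. Z i \<omega> = x} = 0"
  defines "G \<equiv> {\<omega>\<in>space M. (\<exists>k\<in>S-{i}. Z i \<omega> < Z k \<omega>) \<and> (\<exists>k\<in>S-{i}. Z k \<omega> < Z i \<omega>)}"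
  shows "G \<in> events" and "prob G \<ge> 1 - 2 / card S"
proof -
  define Amax where "Amax = {\<omega>\<in>space M. \<forall>k\<in>S-{i}. Z k \<omega> \<le> Z i \<omega>}"
  define Amin where "Amin = {\<omega>\<in>space M. \<forall>k\<in>S-{i}. Z i \<omega> \<le> Z k \<omega>}"
  have rv: "\<And>k. k \<in> S \<Longrightarrow> random_variable borel (Z k)"
    using ind by (simp add: indep_vars_def)
  have "Amax \<in> events" "Amin \<in> events"
    unfolding Amax_def Amin_def using S rv
    by (intro predE pred_intros_finite; auto simp: Measurable.pred_def intro!: borel_measurable_le)+
  moreover have G_eq: "G = space M - (Amax \<union> Amin)"
    unfolding G_def Amax_def Amin_def by (auto simp: not_le dest: leD)
  ultimately show "G \<in> events" by auto
  have "prob (Amax \<union> Amin) \<le> prob Amax + prob Amin"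
    using \<open>Amax \<in> events\<close> \<open>Amin \<in> events\<close>
    by (intro measure_subadditive) (auto simp: emeasure_eq_measure)
  also have "\<dots> \<le> 2 / card S"
    using prob_argmax_le[OF S ind ident atomless] prob_argmin_le[OF S ind ident atomless]
    unfolding Amax_def Amin_def by simp
  finally show "prob G \<ge> 1 - 2 / card S"
    using prob_compl[of "Amax \<union> Amin"] \<open>Amax \<in> events\<close> \<open>Amin \<in> events\<close> G_eq by simp
qed

lemma (in prob_space) prob_Iplus_Iminus_nonempty:
  fixes u :: "'v \<Rightarrow> 'e::real_inner" and w :: "'a \<Rightarrow> 'e"
  assumes S: "finite S" "a \<in> S" and ind: "indep_vars (\<lambda>_. borel) (\<lambda>i \<omega>. w \<omega> \<bullet> u i) S"
    and ident: "\<And>i. i \<in> S \<Longrightarrow> distr M borel (\<lambda>\<omega>. w \<omega> \<bullet> u i) = distr M borel (\<lambda>\<omega>. w \<omega> \<bullet> u a)"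
    and atomless: "\<And>x. prob {\<omega>\<in>space M. w \<omega> \<bullet> u a = x} = 0"
  defines "G \<equiv> {\<omega>\<in>space M. Iplus u S a (w \<omega>) \<noteq> {} \<and> Iminus u S a (w \<omega>) \<noteq> {}}"
  shows "G \<in> events" and "prob G \<ge> 1 - 2 / card S"
proof -
  have "G = {\<omega>\<in>space M. (\<exists>i\<in>S-{a}. w \<omega> \<bullet> u a < w \<omega> \<bullet> u i) \<and> (\<exists>i\<in>S-{a}. w \<omega> \<bullet> u i < w \<omega> \<bullet> u a)}"
    by (auto simp: G_def Iplus_def Iminus_def)
  then show "G \<in> events" and "prob G \<ge> 1 - 2 / card S"
    using prob_neither_argmax_nor_argmin_ge[OF S ind ident atomless] by simp_all
qed

lemma (in prob_space) prob_Inter_ge: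
  fixes p :: real
  assumes K: "finite K" and G: "\<And>k. k \<in> K \<Longrightarrow> G k \<in> events" "\<And>k. k \<in> K \<Longrightarrow> prob (G k) \<ge> 1 - p"
  shows "space M \<inter> (\<Inter>k\<in>K. G k) \<in> events" and "prob (space M \<inter> (\<Inter>k\<in>K. G k)) \<ge> 1 - card K * p"
proof -
  have eq: "space M \<inter> (\<Inter>k\<in>K. G k) = space M - (\<Union>k\<in>K. space M - G k)"
    by auto
  have bad: "(\<Union>k\<in>K. space M - G k) \<in> events"
    using K G(1) by (intro sets.finite_UN) auto
  then show "space M \<inter> (\<Inter>k\<in>K. G k) \<in> events"
    unfolding eq by auto
  have "prob (\<Union>k\<in>K. space M - G k) \<le> (\<Sum>k\<in>K. prob (space M - G k))"
    using K G(1) by (intro finite_measure_subadditive_finite) auto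
  also have "\<dots> \<le> (\<Sum>k\<in>K. p)"
  proof (intro sum_mono)
    fix k assume "k \<in> K"
    then show "prob (space M - G k) \<le> p"
      using G[of k] prob_compl[of "G k"] by simp
  qed
  finally show "prob (space M \<inter> (\<Inter>k\<in>K. G k)) \<ge> 1 - card K * p"
    unfolding eq using prob_compl[OF bad] by simp
qed

lemma softmax_pos: "softmax u r t > 0"
  unfolding softmax_def by (intro divide_pos_pos) (auto intro: sum_pos)

lemma softmax_add_scaleR:
  fixes u :: "'v::finite \<Rightarrow> 'e::real_inner"
  shows "softmax u (r + s *\<^sub>R w) a =
    softmax u r a / (\<Sum>t\<in>UNIV. softmax u r t * exp (s * (w \<bullet> u t - w \<bullet> u a)))"
proof -
  define Z where "Z = (\<Sum>t\<in>UNIV. exp (u t \<bullet> r))"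
  define c where "c = Z * exp (s * (w \<bullet> u a))"
  have "Z > 0" unfolding Z_def by (auto intro: sum_pos)
  then have "c > 0" unfolding c_def by simp
  have exp_shift: "exp (u t \<bullet> (r + s *\<^sub>R w)) = c * (softmax u r t * exp (s * (w \<bullet> u t - w \<bullet> u a)))" for t
    using \<open>Z > 0\<close> unfolding softmax_def Z_def[symmetric] c_def
    by (simp add: inner_add_right inner_commute algebra_simps flip: exp_add exp_diff)
  show ?thesis
    using \<open>c > 0\<close> unfolding softmax_def[of u "r + s *\<^sub>R w"] exp_shift
    by (simp add: sum_distrib_left[symmetric])
qed

lemma massI_pos:
  assumes "finite I" "I \<noteq> {}" "\<And>i. i \<in> I \<Longrightarrow> P i > 0"
  shows "massI P I > 0"
  unfolding massI_def using assms by (rule sum_pos)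

lemma cI_Iplus_pos:
  fixes u :: "'v::finite \<Rightarrow> 'e::real_inner"
  assumes "Iplus u S a w \<noteq> {}" "\<And>i. P i > 0"
  shows "cI P u a w (Iplus u S a w) > 0"
proof -
  have "(\<Sum>i\<in>Iplus u S a w. P i * (w \<bullet> u i - w \<bullet> u a)) > 0"
    using assms by (intro sum_pos) (auto simp: Iplus_def)
  then show ?thesis
    using massI_pos[of "Iplus u S a w" P] assms by (simp add: cI_def)
qed

lemma cI_Iminus_neg:
  fixes u :: "'v::finite \<Rightarrow> 'e::real_inner"
  assumes "Iminus u S a w \<noteq> {}" "\<And>i. P i > 0"
  shows "cI P u a w (Iminus u S a w) < 0"
proof -
  have "(\<Sum>i\<in>Iminus u S a w. P i * (w \<bullet> u a - w \<bullet> u i)) > 0"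
    using assms by (intro sum_pos) (auto simp: Iminus_def)
  then have "(\<Sum>i\<in>Iminus u S a w. P i * (w \<bullet> u i - w \<bullet> u a)) < 0"
    by (simp add: sum_subtractf right_diff_distrib)
  then show ?thesis
    using massI_pos[of "Iminus u S a w" P] assms by (simp add: cI_def divide_neg_pos)
qed

text \<open>Jensen's inequality for the convex function exp, with the weights P i / massI P I.\<close>
lemma massI_mult_exp_cI_le:
  assumes I: "finite I" "I \<noteq> {}" and P: "\<And>i. i \<in> I \<Longrightarrow> P i > 0"
  shows "massI P I * exp (s * cI P u a w I) \<le> (\<Sum>i\<in>I. P i * exp (s * (w \<bullet> u i - w \<bullet> u a)))"
proof -
  define m where "m = massI P I"
  define \<Delta> where "\<Delta> i = w \<bullet> u i - w \<bullet> u a" for i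
  have "m > 0" unfolding m_def using I P by (rule massI_pos)
  have "exp (\<Sum>i\<in>I. (P i / m) *\<^sub>R (s * \<Delta> i)) \<le> (\<Sum>i\<in>I. (P i / m) * exp (s * \<Delta> i))"
  proof (rule convex_on_sum[OF I exp_convex])
    show "(\<Sum>i\<in>I. P i / m) = 1"
      using \<open>m > 0\<close> unfolding m_def massI_def by (simp add: sum_divide_distrib[symmetric])
  qed (use P \<open>m > 0\<close> in \<open>auto intro: less_imp_le\<close>)
  moreover have "(\<Sum>i\<in>I. (P i / m) *\<^sub>R (s * \<Delta> i)) = s * cI P u a w I"
    unfolding cI_def m_def \<Delta>_def by (simp add: sum_distrib_left sum_divide_distrib algebra_simps)
  ultimately show ?thesis
    using \<open>m > 0\<close> unfolding m_def \<Delta>_def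
    by (simp add: sum_divide_distrib[symmetric] pos_le_divide_eq mult.commute)
qed

lemma softmax_add_scaleR_le:
  fixes u :: "'v::finite \<Rightarrow> 'e::real_inner" and r w :: 'e
  assumes "Iplus u S a w \<noteq> {}"
  defines "P \<equiv> softmax u r" and "I \<equiv> Iplus u S a w"
  shows "softmax u (r + s *\<^sub>R w) a \<le> P a / (P a + massI P I * exp (s * cI P u a w I))"
proof -
  define \<Delta> where "\<Delta> t = w \<bullet> u t - w \<bullet> u a" for t
  have P_pos: "P t > 0" for t unfolding P_def by (rule softmax_pos)
  have "a \<notin> I" unfolding I_def Iplus_def by simp
  have "massI P I * exp (s * cI P u a w I) \<le> (\<Sum>i\<in>I. P i * exp (s * \<Delta> i))"
    unfolding \<Delta>_def using assms(1) P_pos unfolding I_def by (intro massI_mult_exp_cI_le) auto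
  also have "P a + (\<Sum>i\<in>I. P i * exp (s * \<Delta> i)) = (\<Sum>t\<in>insert a I. P t * exp (s * \<Delta> t))"
    using \<open>a \<notin> I\<close> by (simp add: \<Delta>_def)
  also have "\<dots> \<le> (\<Sum>t\<in>UNIV. P t * exp (s * \<Delta> t))"
    using P_pos by (intro sum_mono2) (auto intro: less_imp_le)
  finally have "P a + massI P I * exp (s * cI P u a w I) \<le> (\<Sum>t\<in>UNIV. P t * exp (s * \<Delta> t))"
    by simp
  moreover have "P a + massI P I * exp (s * cI P u a w I) > 0"
    using P_pos[of a] massI_pos[of I P] assms(1) P_pos unfolding I_def
    by (intro add_pos_pos mult_pos_pos) auto
  ultimately show ?thesis
    unfolding softmax_add_scaleR P_def \<Delta>_def using softmax_pos[of u r a]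
    by (intro divide_left_mono) auto
qed

lemma softmax_add_scaleR_le_alphaK_betaK:
  fixes u :: "'v::finite \<Rightarrow> 'e::real_inner" and r w :: 'e and lam re sg eps :: real
  assumes I: "Iplus u S a w \<noteq> {}" "Iminus u S a w \<noteq> {}"
    and sg: "sg > 0" and eps: "(1 - eps) * (1 - softmax u r a) > 0" and lam: "lam \<ge> 0"
  shows "alphaK u r S a eps w > 0" and "betaK u r S a sg w > 0"
    and "softmax u (r + (lam * \<bar>re\<bar>) *\<^sub>R w) a \<le> softmax u r a /
       (softmax u r a + (1 - softmax u r a) * alphaK u r S a eps w * (1 - eps)
          * (1 + lam\<^sup>2 * sg\<^sup>2 * (betaK u r S a sg w)\<^sup>2 / 2 * re\<^sup>2))"
proof -
  define P where "P = softmax u r"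
  define mp where "mp = massI P (Iplus u S a w)"
  define mm where "mm = massI P (Iminus u S a w)"
  define cp where "cp = cI P u a w (Iplus u S a w)"
  define cm where "cm = cI P u a w (Iminus u S a w)"
  define s where "s = lam * \<bar>re\<bar>"
  have P_pos: "P t > 0" for t unfolding P_def by (rule softmax_pos)
  have "mp > 0" "mm > 0"
    unfolding mp_def mm_def using I P_pos by (auto intro: massI_pos)
  have "cp > 0" "cm < 0"
    unfolding cp_def cm_def using I P_pos by (auto intro: cI_Iplus_pos cI_Iminus_neg)
  have denom: "(1 - P a) * (1 - eps) > 0"
    using eps unfolding P_def by (simp add: mult.commute)
  have alpha: "(1 - P a) * alphaK u r S a eps w * (1 - eps) = min mp mm"
  proof -
    have "(1 - P a) * alphaK u r S a eps w * (1 - eps)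
        = ((1 - P a) * (1 - eps)) * (min mp mm / ((1 - P a) * (1 - eps)))"
      unfolding alphaK_def P_def mp_def mm_def by (simp only: ac_simps)
    then show ?thesis
      using denom by (metis less_irrefl nonzero_mult_div_cancel_left times_divide_eq_right)
  qed
  have beta: "sg * betaK u r S a sg w = min \<bar>cm\<bar> cp"
    using sg unfolding betaK_def P_def cp_def cm_def by simp
  show "alphaK u r S a eps w > 0"
    unfolding alphaK_def using denom \<open>mp > 0\<close> \<open>mm > 0\<close>
    unfolding P_def mp_def mm_def by (intro divide_pos_pos) auto
  show "betaK u r S a sg w > 0"
    unfolding betaK_def using sg \<open>cp > 0\<close> \<open>cm < 0\<close>
    unfolding P_def cp_def cm_def by (intro divide_pos_pos) auto
  define g where "g = 1 + lam\<^sup>2 * sg\<^sup>2 * (betaK u r S a sg w)\<^sup>2 / 2 * re\<^sup>2"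
  have "g \<ge> 1"
    unfolding g_def by simp
  have "0 \<le> s * cp"
    using \<open>cp > 0\<close> lam unfolding s_def by simp
  have "lam\<^sup>2 * sg\<^sup>2 * (betaK u r S a sg w)\<^sup>2 * re\<^sup>2 = (s * min \<bar>cm\<bar> cp)\<^sup>2"
    unfolding beta[symmetric] s_def by (simp add: power_mult_distrib)
  also have "\<dots> \<le> (s * cp)\<^sup>2"
    using \<open>cp > 0\<close> \<open>cm < 0\<close> lam unfolding s_def by (intro power_mono mult_left_mono) auto
  finally have "g \<le> 1 + s * cp + (s * cp)\<^sup>2 / 2"
    using \<open>0 \<le> s * cp\<close> unfolding g_def by simp
  also have "\<dots> \<le> exp (s * cp)"
    using \<open>0 \<le> s * cp\<close> by (rule exp_lower_Taylor_quadratic)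
  finally have "min mp mm * g \<le> mp * exp (s * cp)"
    using \<open>mp > 0\<close> \<open>g \<ge> 1\<close> by (intro mult_mono) auto
  moreover have "0 < P a + min mp mm * g"
    using P_pos[of a] \<open>mp > 0\<close> \<open>mm > 0\<close> \<open>g \<ge> 1\<close> by (intro add_pos_pos mult_pos_pos) auto
  ultimately have "P a / (P a + mp * exp (s * cp)) \<le> P a / (P a + min mp mm * g)"
    using P_pos[of a] by (intro divide_left_mono) auto
  with softmax_add_scaleR_le[OF I(1), of r s] show "softmax u (r + (lam * \<bar>re\<bar>) *\<^sub>R w) a \<le> softmax u r a /
       (softmax u r a + (1 - softmax u r a) * alphaK u r S a eps w * (1 - eps)
          * (1 + lam\<^sup>2 * sg\<^sup>2 * (betaK u r S a sg w)\<^sup>2 / 2 * re\<^sup>2))"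
    unfolding alpha[unfolded P_def] g_def[symmetric] s_def[symmetric] P_def mp_def cp_def by linarith
qed

theorem mainTheorem7:
  fixes M :: "'w measure"
    and u :: "'v::finite \<Rightarrow> 'e::euclidean_space"
    and a :: "nat \<Rightarrow> 'v"
    and N T :: nat
    and r :: "nat \<Rightarrow> 'e"
    and re lam :: real
    and S :: "nat \<Rightarrow> 'v set"
    and eps sg :: "nat \<Rightarrow> real"
    and v :: "nat \<Rightarrow> 'w \<Rightarrow> 'e"
  assumes "prob_space M"
    and "re \<noteq> 0" and "lam > 0" and "T \<ge> 3"
    and "\<forall>k<N. softmax u (r k) (a k) < 1"
    and "\<forall>k<N. a k \<in> S k \<and> card (S k) = T"
    and "\<forall>k<N. 0 \<le> eps k \<and> eps k < 1"
    and "\<forall>k<N. (\<Sum>i\<in>S k - {a k}. softmax u (r k) i)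
                 = (1 - eps k) * (1 - softmax u (r k) (a k))"
    and "\<forall>k<N. (1 - eps k) * (1 - softmax u (r k) (a k)) > 0"
    and "\<forall>k<N. v k \<in> borel_measurable M"
    and "\<forall>k<N. \<forall>\<omega>\<in>space M. norm (v k \<omega>) = 1"
    and "\<forall>k<N. prob_space.indep_vars M (\<lambda>_. borel) (\<lambda>i \<omega>. v k \<omega> \<bullet> u i) (S k)"
    and "\<forall>k<N. \<forall>i\<in>S k. \<forall>j\<in>S k.
           distr M borel (\<lambda>\<omega>. v k \<omega> \<bullet> u i) = distr M borel (\<lambda>\<omega>. v k \<omega> \<bullet> u j)"
    and "\<forall>k<N. \<forall>i\<in>S k. \<forall>x. measure M {\<omega>\<in>space M. v k \<omega> \<bullet> u i = x} = 0"
    and "\<forall>k<N. sg k > 0 \<and>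
           (\<forall>i\<in>S k. prob_space.variance M (\<lambda>\<omega>. v k \<omega> \<bullet> u i) = (sg k)\<^sup>2)"
  shows "\<exists>A\<in>sets M. measure M A \<ge> 1 - 2 * real N / real T \<and>
           (\<forall>\<omega>\<in>A.
              (\<forall>k<N. alphaK u (r k) (S k) (a k) (eps k) (v k \<omega>) > 0 \<and>
                     betaK u (r k) (S k) (a k) (sg k) (v k \<omega>) > 0) \<and>
              (\<Prod>k<N. softmax u (r k + (lam * \<bar>re\<bar>) *\<^sub>R v k \<omega>) (a k))
                \<le> (\<Prod>k<N. softmax u (r k) (a k)) /
                   (\<Prod>k<N. softmax u (r k) (a k)
                      + (1 - softmax u (r k) (a k)) * alphaK u (r k) (S k) (a k) (eps k) (v k \<omega>)
                        * (1 - eps k)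
                        * (1 + lam\<^sup>2 * (sg k)\<^sup>2 * (betaK u (r k) (S k) (a k) (sg k) (v k \<omega>))\<^sup>2 / 2
                              * re\<^sup>2)))"
proof -
  interpret prob_space M by fact
  define G where "G k = {\<omega>\<in>space M. Iplus u (S k) (a k) (v k \<omega>) \<noteq> {} \<and> Iminus u (S k) (a k) (v k \<omega>) \<noteq> {}}" for k
  have G: "G k \<in> events \<and> prob (G k) \<ge> 1 - 2 / T" if "k < N" for k
  proof -
    have a: "a k \<in> S k" and card: "card (S k) = T"
      using assms(6) that by auto
    show ?thesis
      using prob_Iplus_Iminus_nonempty[OF finite a assms(12)[rule_format, OF that]
          assms(13)[rule_format, OF that _ a] assms(14)[rule_format, OF that a]]
      unfolding G_def card by simp
  qed
  define A where "A = space M \<inter> (\<Inter>k\<in>{..<N}. G k)"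
  have "A \<in> events" "prob A \<ge> 1 - 2 * real N / real T"
    using prob_Inter_ge[of "{..<N}" G "2 / T"] G unfolding A_def by (auto simp: mult.commute[of "real N"])
  moreover have "alphaK u (r k) (S k) (a k) (eps k) (v k \<omega>) > 0 \<and> betaK u (r k) (S k) (a k) (sg k) (v k \<omega>) > 0 \<and>
       softmax u (r k + (lam * \<bar>re\<bar>) *\<^sub>R v k \<omega>) (a k) \<le> softmax u (r k) (a k) /
       (softmax u (r k) (a k) + (1 - softmax u (r k) (a k)) * alphaK u (r k) (S k) (a k) (eps k) (v k \<omega>) * (1 - eps k)
          * (1 + lam\<^sup>2 * (sg k)\<^sup>2 * (betaK u (r k) (S k) (a k) (sg k) (v k \<omega>))\<^sup>2 / 2 * re\<^sup>2))"
    if "\<omega> \<in> A" "k < N" for \<omega> k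
  proof -
    have "Iplus u (S k) (a k) (v k \<omega>) \<noteq> {}" "Iminus u (S k) (a k) (v k \<omega>) \<noteq> {}"
      using that unfolding A_def G_def by auto
    moreover have "sg k > 0" "(1 - eps k) * (1 - softmax u (r k) (a k)) > 0"
      using assms(9,15) that(2) by auto
    ultimately show ?thesis
      using assms(3) by (intro conjI softmax_add_scaleR_le_alphaK_betaK) auto
  qed
  ultimately show ?thesis
    by (intro bexI[of _ A]) (auto simp: prod_dividef[symmetric] intro!: prod_mono less_imp_le[OF softmax_pos])
qed

end
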